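(* Let $P^1,\dots,P^m\in\mathbb{R}^n$ ($m\ge2$) be in general position. For $k=0,1,\dots,m-2$ let $L_k=L(P^{k+1},\dots,P^m)$. Let $Q^0\in L_0$ be the equidistant point from $P^1,\dots,P^m$, and define recursively $Q^k=\pi(Q^{k-1}\,|\,L_k)$ for $k=1,\dots,m-2$. Let $\boldsymbol\lambda^k=(\lambda^k_1,\dots,\lambda^k_m)$ be the barycentric coordinate of $Q^k$ about $P^1,\dots,P^m$. Let $K\in\{0,1,\dots,m-2\}$ and assume: for every $k=0,1,\dots,K-1$, $\lambda^k_i=0$ for $i=1,\dots,k$, $\lambda^k_{k+1}<0$, and $\lambda^k_i>0$ for $i=k+2,\dots,m$; and $\lambda^K_i=0$ for $i=1,\dots,K$ and $\lambda^K_i>0$ for $i=K+1,\dots,m$. Then the center of the smallest enclosing circle of $P^1,\dots,P^m$ is $Q^\ast=Q^K$ and its radius is $d^\ast=d(P^{K+1},Q^K)$.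
   Context: $d$ is the Euclidean distance on $\mathbb{R}^n$. Points $P^1,\dots,P^m$ are in general position if $P^2-P^1,\dots,P^m-P^1$ are linearly independent. $L(S^1,\dots,S^r)$ denotes the affine subspace spanned by the points $S^1,\dots,S^r$ (all affine combinations). For $Q'\in\mathbb{R}^n$ and an affine subspace $L$, $\pi(Q'|L)$ is the orthogonal projection, i.e. the unique $Q\in L$ minimizing $d(Q,Q')$. The barycentric coordinate of $Q\in L(P^1,\dots,P^m)$ about $P^1,\dots,P^m$ is the unique $\boldsymbol\lambda\in\mathbb{R}^m$ with $\sum_i\lambda_i=1$ and $Q=\sum_i\lambda_iP^i$. The equidistant point is the unique $Q^0\in L(P^1,\dots,P^m)$ with $d(P^1,Q^0)=\dots=d(P^m,Q^0)$. The smallest enclosing circle of $P^1,\dots,P^m$ is the ball whose center $Q^\ast$ attains $\min_{Q\in\mathbb{R}^n}\max_{1\le i\le m}d(P^i,Q)$ and whose radius $d^\ast$ is this minimum value. *)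

theory Defs
  imports "HOL-Analysis.Analysis"
begin

text \<open>Points are indexed P 1, ..., P m, as functions nat => 'a with 'a a Euclidean space (R^n).\<close>

definition general_position :: "(nat \<Rightarrow> 'a::euclidean_space) \<Rightarrow> nat \<Rightarrow> bool" where
  "general_position P m \<longleftrightarrow>
     inj_on (\<lambda>i. P i - P 1) {2..m} \<and> independent ((\<lambda>i. P i - P 1) ` {2..m})"

definition Lspan :: "(nat \<Rightarrow> 'a::euclidean_space) \<Rightarrow> nat \<Rightarrow> nat \<Rightarrow> 'a set" where
  "Lspan P a m = affine hull (P ` {a..m})"

definition proj :: "'a::euclidean_space \<Rightarrow> 'a set \<Rightarrow> 'a" where
  "proj Q' L = (THE Q. Q \<in> L \<and> (\<forall>Y\<in>L. dist Q Q' \<le> dist Y Q'))"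

definition bary :: "(nat \<Rightarrow> 'a::euclidean_space) \<Rightarrow> nat \<Rightarrow> 'a \<Rightarrow> (nat \<Rightarrow> real)" where
  "bary P m Q = (THE lam. (\<Sum>i=1..m. lam i) = 1 \<and> Q = (\<Sum>i=1..m. lam i *\<^sub>R P i)
                      \<and> (\<forall>i. i \<notin> {1..m} \<longrightarrow> lam i = 0))"

definition equidistant_point :: "(nat \<Rightarrow> 'a::euclidean_space) \<Rightarrow> nat \<Rightarrow> 'a" where
  "equidistant_point P m = (THE Q. Q \<in> Lspan P 1 m \<and> (\<forall>i\<in>{1..m}. dist (P i) Q = dist (P 1) Q))"

fun Qseq :: "(nat \<Rightarrow> 'a::euclidean_space) \<Rightarrow> nat \<Rightarrow> nat \<Rightarrow> 'a" where
  "Qseq P m 0 = equidistant_point P m"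
| "Qseq P m (Suc k) = proj (Qseq P m k) (Lspan P (Suc k + 1) m)"

definition enclosing_radius :: "(nat \<Rightarrow> 'a::metric_space) \<Rightarrow> nat \<Rightarrow> 'a \<Rightarrow> real" where
  "enclosing_radius P m Q = Max ((\<lambda>i. dist (P i) Q) ` {1..m})"

definition sec_center :: "(nat \<Rightarrow> 'a::metric_space) \<Rightarrow> nat \<Rightarrow> 'a" where
  "sec_center P m = (THE Q. \<forall>Q'. enclosing_radius P m Q \<le> enclosing_radius P m Q')"

definition sec_radius :: "(nat \<Rightarrow> 'a::metric_space) \<Rightarrow> nat \<Rightarrow> real" where
  "sec_radius P m = (INF Q. enclosing_radius P m Q)"

end

theory Submission
  imports Defs
begin

text \<open>Q^K is a convex combination of P^(K+1), ..., P^m, all at distance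
  r = d(P^(K+1), Q^K) from it. By the parallel-axis identity
  \<Sum> \<lambda>_i d(P^i, Y)^2 = r^2 + d(Q^K, Y)^2 every centre Y other than Q^K has a
  point farther than r away, so Q^K is the unique optimal centre as soon as the ball
  of radius r around it contains all points. This is shown for P^K, ..., P^1 in turn:
  the barycentric coordinates of Q^(j-1) vanish before j, are negative at j and
  positive after j, and the same identity then bounds d(P^j, Q^K) by the bounds
  already known for the later points.\<close>

lemma closest_point_affine_orthogonal:
  fixes S :: "'a::euclidean_space set"
  assumes "affine S" "closed S" "y \<in> S"
  shows "(a - closest_point S a) \<bullet> (y - closest_point S a) = 0"
proof -
  let ?c = "closest_point S a"
  have "convex S" using assms(1) by (rule affine_imp_convex)
  have c: "?c \<in> S" using assms(2,3) closest_point_in_set by blast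
  have "(1 - 2) *\<^sub>R y + 2 *\<^sub>R ?c \<in> S"
    using affine_def[THEN iffD1, OF assms(1), rule_format, OF assms(3) c, of "1 - 2" 2] by simp
  then have "(a - ?c) \<bullet> ((2 *\<^sub>R ?c - y) - ?c) \<le> 0"
    by (intro closest_point_dot[OF \<open>convex S\<close> assms(2)]) simp
  moreover have "(2 *\<^sub>R ?c - y) - ?c = - (y - ?c)"
    by (simp add: scaleR_2)
  ultimately have "(a - ?c) \<bullet> (y - ?c) \<ge> 0"
    by (metis inner_minus_right neg_le_0_iff_le)
  moreover have "(a - ?c) \<bullet> (y - ?c) \<le> 0"
    by (rule closest_point_dot[OF \<open>convex S\<close> assms(2,3)])
  ultimately show ?thesis by linarith
qed

lemma proj_eq_closest_point:
  fixes S :: "'a::euclidean_space set"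
  assumes "convex S" "closed S" "S \<noteq> {}"
  shows "proj a S = closest_point S a"
  unfolding proj_def
proof (rule the_equality)
  show "closest_point S a \<in> S \<and> (\<forall>Y\<in>S. dist (closest_point S a) a \<le> dist Y a)"
    using closest_point_exists[OF assms(2,3), of a] by (simp add: dist_commute)
next
  fix Q assume "Q \<in> S \<and> (\<forall>Y\<in>S. dist Q a \<le> dist Y a)"
  then show "Q = closest_point S a"
    using closest_point_unique[OF assms(1,2)] by (simp add: dist_commute)
qed

lemma sum_weights_const:
  fixes w f :: "'i \<Rightarrow> real"
  assumes "sum w I = 1" "\<And>i. i \<in> I \<Longrightarrow> w i \<noteq> 0 \<Longrightarrow> f i = c"
  shows "(\<Sum>i\<in>I. w i * f i) = c"
proof -
  have "(\<Sum>i\<in>I. w i * f i) = (\<Sum>i\<in>I. w i * c)"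
    using assms(2) by (intro sum.cong) auto
  also have "\<dots> = c" using assms(1) by (simp add: sum_distrib_right[symmetric])
  finally show ?thesis .
qed

text \<open>The parallel-axis identity, for weights of any sign: the barycentric
  coordinates of the points Q^k have negative entries.\<close>
lemma weighted_sum_dist_sq_shift:
  fixes P :: "'i \<Rightarrow> 'a::real_inner"
  assumes "sum w I = 1" "X = (\<Sum>i\<in>I. w i *\<^sub>R P i)"
  shows "(\<Sum>i\<in>I. w i * (dist (P i) Y)\<^sup>2) = (\<Sum>i\<in>I. w i * (dist (P i) X)\<^sup>2) + (dist X Y)\<^sup>2"
proof -
  have sq: "(dist (P i) Y)\<^sup>2 = (dist (P i) X)\<^sup>2 + 2 * ((P i - X) \<bullet> (X - Y)) + (dist X Y)\<^sup>2" for i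
  proof -
    have "P i - Y = (P i - X) + (X - Y)" by simp
    then show ?thesis
      by (simp only: dist_norm power2_norm_eq_inner inner_add_left inner_add_right
          inner_commute[of "X - Y" "P i - X"])
  qed
  have "(\<Sum>i\<in>I. w i * ((P i - X) \<bullet> (X - Y))) = (\<Sum>i\<in>I. w i *\<^sub>R (P i - X)) \<bullet> (X - Y)"
    by (simp add: inner_sum_left)
  also have "(\<Sum>i\<in>I. w i *\<^sub>R (P i - X)) = X - (\<Sum>i\<in>I. w i) *\<^sub>R X"
    using assms(2) by (simp add: scaleR_diff_right sum_subtractf scaleR_sum_left)
  finally have cross: "(\<Sum>i\<in>I. w i * ((P i - X) \<bullet> (X - Y))) = 0"
    using assms(1) by simp
  have "(\<Sum>i\<in>I. w i * (dist (P i) Y)\<^sup>2)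
      = (\<Sum>i\<in>I. w i * (dist (P i) X)\<^sup>2 + 2 * (w i * ((P i - X) \<bullet> (X - Y))) + w i * (dist X Y)\<^sup>2)"
    by (intro sum.cong) (simp_all only: sq algebra_simps)
  also have "\<dots> = (\<Sum>i\<in>I. w i * (dist (P i) X)\<^sup>2) + 2 * (\<Sum>i\<in>I. w i * ((P i - X) \<bullet> (X - Y)))
        + (\<Sum>i\<in>I. w i) * (dist X Y)\<^sup>2"
    by (simp only: sum.distrib sum_distrib_left[symmetric] sum_distrib_right[symmetric])
  finally show ?thesis using cross assms(1) by simp
qed

lemma weighted_sum_dist_sq_equidistant:
  fixes P :: "'i \<Rightarrow> 'a::real_inner"
  assumes "sum w I = 1" "X = (\<Sum>i\<in>I. w i *\<^sub>R P i)"
    and "\<And>i. i \<in> I \<Longrightarrow> w i \<noteq> 0 \<Longrightarrow> dist (P i) X = r"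
  shows "(\<Sum>i\<in>I. w i * (dist (P i) Y)\<^sup>2) = r\<^sup>2 + (dist X Y)\<^sup>2"
  using weighted_sum_dist_sq_shift[OF assms(1,2)] sum_weights_const[OF assms(1), of "\<lambda>i. (dist (P i) X)\<^sup>2"]
    assms(3) by simp

lemma dist_le_of_negative_weight:
  fixes P :: "'i \<Rightarrow> 'a::real_inner"
  assumes "finite I" "j \<in> I" "sum w I = 1" "w j < 0" "r \<ge> 0"
    and "r\<^sup>2 \<le> (\<Sum>i\<in>I. w i * (dist (P i) C)\<^sup>2)"
    and "\<And>i. i \<in> I - {j} \<Longrightarrow> w i = 0 \<or> (0 < w i \<and> dist (P i) C \<le> r)"
  shows "dist (P j) C \<le> r"
proof -
  let ?g = "\<lambda>i. w i * ((dist (P i) C)\<^sup>2 - r\<^sup>2)"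
  have "0 \<le> (\<Sum>i\<in>I. ?g i)"
    using assms(3,6) by (simp add: right_diff_distrib sum_subtractf sum_distrib_right[symmetric])
  also have "\<dots> = ?g j + (\<Sum>i\<in>I - {j}. ?g i)"
    by (rule sum.remove[OF assms(1,2)])
  also have "(\<Sum>i\<in>I - {j}. ?g i) \<le> 0"
  proof (rule sum_nonpos)
    fix i assume "i \<in> I - {j}"
    then consider "w i = 0" | "0 < w i" "dist (P i) C \<le> r" using assms(7) by blast
    then show "?g i \<le> 0"
    proof cases
      case 2
      then have "(dist (P i) C)\<^sup>2 \<le> r\<^sup>2" by (simp add: power_mono)
      then show ?thesis using \<open>0 < w i\<close> by (simp add: mult_nonneg_nonpos)
    qed simp
  qed
  finally have "(dist (P j) C)\<^sup>2 \<le> r\<^sup>2"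
    using assms(4) by (simp add: zero_le_mult_iff)
  then show ?thesis using assms(5) by (rule power2_le_imp_le)
qed

lemma sec_center_sec_radius_eqI:
  fixes P :: "nat \<Rightarrow> 'a::real_inner"
  assumes "\<forall>i\<in>{1..m}. 0 \<le> lam i" "sum lam {1..m} = 1" "C = (\<Sum>i=1..m. lam i *\<^sub>R P i)"
    and "\<forall>i\<in>{1..m}. dist (P i) C \<le> r" "\<forall>i\<in>{1..m}. lam i \<noteq> 0 \<longrightarrow> dist (P i) C = r"
  shows "sec_center P m = C \<and> sec_radius P m = r"
proof -
  obtain j where j: "j \<in> {1..m}" "lam j \<noteq> 0"
    using assms(2) by (metis sum.neutral zero_neq_one)
  have radius_C: "enclosing_radius P m C = r"
    unfolding enclosing_radius_def using assms(4,5) j by (intro Max_eqI) auto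
  have lower: "r\<^sup>2 + (dist C Y)\<^sup>2 \<le> (enclosing_radius P m Y)\<^sup>2" for Y
  proof -
    let ?M = "enclosing_radius P m Y"
    have le: "dist (P i) Y \<le> ?M" if "i \<in> {1..m}" for i
      unfolding enclosing_radius_def using that by (intro Max_ge) auto
    have "r\<^sup>2 + (dist C Y)\<^sup>2 = (\<Sum>i=1..m. lam i * (dist (P i) Y)\<^sup>2)"
      using weighted_sum_dist_sq_equidistant[OF assms(2,3)] assms(5) by simp
    also have "\<dots> \<le> (\<Sum>i=1..m. lam i * ?M\<^sup>2)"
      using assms(1) le by (intro sum_mono mult_left_mono power_mono) auto
    also have "\<dots> = ?M\<^sup>2" using assms(2) by (simp add: sum_distrib_right[symmetric])
    finally show ?thesis .
  qed
  have r_le: "r \<le> enclosing_radius P m Y" for Y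
  proof -
    have "0 \<le> enclosing_radius P m Y"
      unfolding enclosing_radius_def using j(1)
      by (meson Max_ge finite_atLeastAtMost finite_imageI imageI order_trans zero_le_dist)
    moreover have "r\<^sup>2 \<le> (enclosing_radius P m Y)\<^sup>2"
      using lower[of Y] by (smt (verit) zero_le_power2)
    ultimately show ?thesis by (rule power2_le_imp_le[rotated])
  qed
  have "sec_center P m = C"
    unfolding sec_center_def
  proof (rule the_equality)
    fix Q assume "\<forall>Q'. enclosing_radius P m Q \<le> enclosing_radius P m Q'"
    then have "enclosing_radius P m Q = r" using radius_C r_le by (metis order_antisym)
    then show "Q = C" using lower[of Q] by simp
  qed (use radius_C r_le in simp)
  moreover have "sec_radius P m = r"
    unfolding sec_radius_def using radius_C r_le by (intro cInf_eq_minimum) (auto intro: range_eqI)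
  ultimately show ?thesis by simp
qed

lemma affine_hull_image_combination:
  fixes P :: "'i \<Rightarrow> 'a::real_vector"
  assumes "finite I" "x \<in> affine hull (P ` I)"
  obtains l where "sum l I = 1" "x = (\<Sum>i\<in>I. l i *\<^sub>R P i)"
proof -
  let ?A = "{\<Sum>i\<in>I. l i *\<^sub>R P i | l. sum l I = 1}"
  have "affine ?A"
    unfolding affine_def
  proof (clarify)
    fix l l' :: "'i \<Rightarrow> real" and u v :: real
    assume "sum l I = 1" "sum l' I = 1" "u + v = 1"
    then have "sum (\<lambda>i. u * l i + v * l' i) I = 1"
      by (simp add: sum.distrib sum_distrib_left[symmetric])
    moreover have "u *\<^sub>R (\<Sum>i\<in>I. l i *\<^sub>R P i) + v *\<^sub>R (\<Sum>i\<in>I. l' i *\<^sub>R P i)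
        = (\<Sum>i\<in>I. (u * l i + v * l' i) *\<^sub>R P i)"
      by (simp add: scaleR_sum_right sum.distrib scaleR_add_left)
    ultimately show "\<exists>l''. u *\<^sub>R (\<Sum>i\<in>I. l i *\<^sub>R P i) + v *\<^sub>R (\<Sum>i\<in>I. l' i *\<^sub>R P i)
        = (\<Sum>i\<in>I. l'' i *\<^sub>R P i) \<and> sum l'' I = 1"
      by (intro exI[of _ "\<lambda>i. u * l i + v * l' i"] conjI)
  qed
  moreover have "P ` I \<subseteq> ?A"
  proof (rule image_subsetI)
    fix j assume "j \<in> I"
    let ?\<delta> = "\<lambda>i. if i = j then 1 else 0 :: real"
    have "sum ?\<delta> I = 1" "P j = (\<Sum>i\<in>I. ?\<delta> i *\<^sub>R P i)"
      using assms(1) \<open>j \<in> I\<close> by (simp_all add: if_distrib[of "\<lambda>c. c *\<^sub>R _"] cong: if_cong)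
    then show "P j \<in> ?A" by (intro CollectI exI[of _ ?\<delta>] conjI)
  qed
  ultimately have "affine hull (P ` I) \<subseteq> ?A" by (rule hull_minimal[rotated])
  then show ?thesis using assms(2) that by blast
qed

lemma general_position_combination_eq_0:
  fixes P :: "nat \<Rightarrow> 'a::euclidean_space"
  assumes gp: "general_position P m"
    and "sum d {1..m} = 0" "(\<Sum>i=1..m. d i *\<^sub>R P i) = 0" "i \<in> {1..m}"
  shows "d i = 0"
proof -
  let ?u = "\<lambda>i. P i - P 1"
  have inj: "inj_on ?u {2..m}" and ind: "independent (?u ` {2..m})"
    using gp unfolding general_position_def by auto
  have m: "1 \<le> m" using assms(4) by simp
  have split: "(\<Sum>i=1..m. f i) = f 1 + (\<Sum>i=2..m. f i)" for f :: "nat \<Rightarrow> 'b::comm_monoid_add"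
    using sum.atLeast_Suc_atMost[OF m] by (simp add: numeral_2_eq_2)
  have "(\<Sum>i=2..m. d i *\<^sub>R ?u i) = (\<Sum>i=1..m. d i *\<^sub>R ?u i)"
    using split[of "\<lambda>i. d i *\<^sub>R ?u i"] by simp
  also have "\<dots> = (\<Sum>i=1..m. d i *\<^sub>R P i) - (\<Sum>i=1..m. d i) *\<^sub>R P 1"
    by (simp add: scaleR_diff_right sum_subtractf scaleR_sum_left)
  finally have "(\<Sum>i=2..m. d i *\<^sub>R ?u i) = 0" using assms(2,3) by simp
  moreover have "(\<Sum>v\<in>?u ` {2..m}. d (the_inv_into {2..m} ?u v) *\<^sub>R v) = (\<Sum>i=2..m. d i *\<^sub>R ?u i)"
    unfolding sum.reindex[OF inj] by (intro sum.cong refl) (simp only: comp_def the_inv_into_f_f[OF inj])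
  ultimately have "d (the_inv_into {2..m} ?u (?u j)) = 0" if "j \<in> {2..m}" for j
    using independentD[OF ind _ subset_refl, of "\<lambda>v. d (the_inv_into {2..m} ?u v)" "?u j"] that
    by simp
  then have d2: "d j = 0" if "j \<in> {2..m}" for j
    using that by (metis the_inv_into_f_f[OF inj])
  moreover have "d 1 = 0"
    using assms(2) split[of d] d2 by simp
  ultimately show ?thesis
    using assms(4) by (cases "i = 1") auto
qed

lemma bary_combination:
  fixes P :: "nat \<Rightarrow> 'a::euclidean_space"
  assumes gp: "general_position P m" and "Q \<in> Lspan P 1 m"
  shows "sum (bary P m Q) {1..m} = 1" "Q = (\<Sum>i=1..m. bary P m Q i *\<^sub>R P i)"
proof -
  let ?R = "\<lambda>lam. (\<Sum>i=1..m. lam i) = 1 \<and> Q = (\<Sum>i=1..m. lam i *\<^sub>R P i)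
                  \<and> (\<forall>i. i \<notin> {1..m} \<longrightarrow> lam i = 0)"
  obtain l where l: "sum l {1..m} = 1" "Q = (\<Sum>i=1..m. l i *\<^sub>R P i)"
    using affine_hull_image_combination[OF finite_atLeastAtMost assms(2)[unfolded Lspan_def]]
    by blast
  have "\<exists>!lam. ?R lam"
  proof (rule ex_ex1I)
    let ?l = "\<lambda>i. if i \<in> {1..m} then l i else 0"
    have "sum ?l {1..m} = sum l {1..m}"
      by (rule sum.cong) simp_all
    moreover have "(\<Sum>i=1..m. ?l i *\<^sub>R P i) = (\<Sum>i=1..m. l i *\<^sub>R P i)"
      by (rule sum.cong) simp_all
    ultimately show "\<exists>lam. ?R lam" using l by (intro exI[of _ ?l]) simp
  next
    fix lam lam' assume "?R lam" "?R lam'"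
    then have "sum (\<lambda>i. lam i - lam' i) {1..m} = 0"
      by (simp add: sum_subtractf)
    moreover have "(\<Sum>i=1..m. (lam i - lam' i) *\<^sub>R P i) = 0"
      using \<open>?R lam\<close> \<open>?R lam'\<close> by (simp add: scaleR_diff_left sum_subtractf)
    ultimately have "lam i - lam' i = 0" if "i \<in> {1..m}" for i
      using general_position_combination_eq_0[OF gp _ _ that] by blast
    with \<open>?R lam\<close> \<open>?R lam'\<close> show "lam = lam'"
      by (metis eq_iff_diff_eq_0 ext)
  qed
  then have "?R (bary P m Q)" unfolding bary_def by (rule theI')
  then show "sum (bary P m Q) {1..m} = 1" "Q = (\<Sum>i=1..m. bary P m Q i *\<^sub>R P i)" by auto
qed

lemma equidistant_in_affine_hull_unique:
  fixes S :: "'a::euclidean_space set"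
  assumes "a \<in> S" "Q \<in> affine hull S" "Q' \<in> affine hull S"
    and "\<forall>x\<in>S. dist x Q = dist a Q" "\<forall>x\<in>S. dist x Q' = dist a Q'"
  shows "Q = Q'"
proof -
  let ?D = "(\<lambda>x. x - a) ` S"
  have sq: "x \<bullet> x - 2 * (x \<bullet> Y) = a \<bullet> a - 2 * (a \<bullet> Y)" if "dist x Y = dist a Y" for x Y :: 'a
  proof -
    have "(dist x Y)\<^sup>2 = (dist a Y)\<^sup>2" using that by simp
    then show ?thesis
      by (simp add: dist_norm power2_norm_eq_inner inner_diff_left inner_diff_right inner_commute)
  qed
  have orth: "orthogonal (Q - Q') y" if "y \<in> ?D" for y
  proof -
    obtain x where x: "x \<in> S" "y = x - a" using \<open>y \<in> ?D\<close> by blast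
    have "x \<bullet> x - 2 * (x \<bullet> Q) = a \<bullet> a - 2 * (a \<bullet> Q)"
      "x \<bullet> x - 2 * (x \<bullet> Q') = a \<bullet> a - 2 * (a \<bullet> Q')"
      using sq[OF bspec[OF assms(4) x(1)]] sq[OF bspec[OF assms(5) x(1)]] .
    then have "(x - a) \<bullet> (Q - Q') = 0"
      by (simp add: inner_diff_left inner_diff_right)
    then show ?thesis using x(2) by (simp add: orthogonal_def inner_commute)
  qed
  have "Q - Q' \<in> span ?D"
  proof -
    have "Q - a \<in> span ?D" "Q' - a \<in> span ?D"
      using assms(2,3) diffs_affine_hull_span[OF assms(1)] by blast+
    then have "(Q - a) - (Q' - a) \<in> span ?D" by (rule span_diff)
    moreover have "(Q - a) - (Q' - a) = Q - Q'" by simp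
    ultimately show ?thesis by (simp only:)
  qed
  then have "orthogonal (Q - Q') (Q - Q')" using orth by (rule orthogonal_to_span)
  then show ?thesis by (simp add: orthogonal_self)
qed

text \<open>The circumcentre: choose a point v of the span of the edge vectors u with
  u \<bullet> v = u \<bullet> u / 2 for every edge vector u, by projecting onto that span a vector
  representing a linear functional which prescribes these values on the independent edges.\<close>
lemma equidistant_in_affine_hull_exists:
  fixes S :: "'a::euclidean_space set"
  assumes "a \<in> S" and ind: "independent ((\<lambda>x. x - a) ` (S - {a}))"
  shows "\<exists>Q\<in>affine hull S. \<forall>x\<in>S. dist x Q = dist a Q"
proof -
  let ?U = "(\<lambda>x. x - a) ` (S - {a})"
  obtain g :: "'a \<Rightarrow> real" where g: "linear g" "\<forall>u\<in>?U. g u = (u \<bullet> u) / 2"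
    using linear_independent_extend[OF ind, of "\<lambda>u. (u \<bullet> u) / 2"] by blast
  define w where "w = adjoint g 1"
  have gw: "g x = x \<bullet> w" for x
    using adjoint_works[OF g(1), of x 1] by (simp add: w_def)
  define v where "v = closest_point (span ?U) w"
  have v_span: "v \<in> span ?U"
    unfolding v_def using span_zero[of ?U] by (intro closest_point_in_set) auto
  have uv: "norm (u - v) = norm v" if "u \<in> ?U" for u
  proof -
    have "v + u \<in> span ?U" using v_span that by (simp add: span_add span_base)
    then have "(w - v) \<bullet> ((v + u) - v) = 0"
      unfolding v_def by (intro closest_point_affine_orthogonal) (simp_all add: subspace_imp_affine)
    then have "u \<bullet> v = u \<bullet> w" by (simp add: inner_diff_right inner_commute)
    moreover have "g u = (u \<bullet> u) / 2" using g(2) that by blast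
    ultimately have "u \<bullet> v = (u \<bullet> u) / 2" using gw[of u] by simp
    then have "(norm (u - v))\<^sup>2 = (norm v)\<^sup>2"
      by (simp add: power2_norm_eq_inner inner_diff_left inner_diff_right inner_commute)
    then show ?thesis by simp
  qed
  have "v \<in> span ((\<lambda>x. x - a) ` S)"
    using v_span span_mono[of ?U "(\<lambda>x. x - a) ` S"] by blast
  then obtain Q where Q: "Q \<in> affine hull S" "v = Q - a"
    using diffs_affine_hull_span[OF assms(1)] by (metis imageE)
  have "dist x Q = dist a Q" if "x \<in> S" for x
  proof (cases "x = a")
    case False
    then have u: "x - a \<in> ?U" using that by blast
    have "dist x Q = norm ((x - a) - v)" using Q(2) by (simp add: dist_norm algebra_simps)
    moreover have "dist a Q = norm v" using Q(2) by (simp add: dist_norm norm_minus_commute)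
    ultimately show ?thesis using uv[OF u] by simp
  qed simp
  then show ?thesis using Q(1) by blast
qed

lemma equidistant_point:
  fixes P :: "nat \<Rightarrow> 'a::euclidean_space"
  assumes gp: "general_position P m" and "1 \<le> m"
  shows "equidistant_point P m \<in> Lspan P 1 m"
    and "\<forall>i\<in>{1..m}. dist (P i) (equidistant_point P m) = dist (P 1) (equidistant_point P m)"
proof -
  let ?S = "P ` {1..m}"
  have P1: "P 1 \<in> ?S" using assms(2) by simp
  have "(\<lambda>x. x - P 1) ` (?S - {P 1}) \<subseteq> (\<lambda>i. P i - P 1) ` {2..m}"
  proof (rule image_subsetI)
    fix x assume "x \<in> ?S - {P 1}"
    then obtain i where i: "i \<in> {1..m}" "x = P i" "P i \<noteq> P 1" by blast
    then have "i \<in> {2..m}" by (cases "i = 1") auto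
    then show "x - P 1 \<in> (\<lambda>i. P i - P 1) ` {2..m}" using i(2) by blast
  qed
  then have "independent ((\<lambda>x. x - P 1) ` (?S - {P 1}))"
    using gp independent_mono unfolding general_position_def by blast
  then have "\<exists>!Q. Q \<in> affine hull ?S \<and> (\<forall>x\<in>?S. dist x Q = dist (P 1) Q)"
    using equidistant_in_affine_hull_exists[OF P1] equidistant_in_affine_hull_unique[OF P1]
    by (metis (no_types, lifting))
  moreover have "(\<forall>x\<in>?S. dist x Q = dist (P 1) Q) \<longleftrightarrow> (\<forall>i\<in>{1..m}. dist (P i) Q = dist (P 1) Q)"
    for Q by simp
  ultimately have "\<exists>!Q. Q \<in> Lspan P 1 m \<and> (\<forall>i\<in>{1..m}. dist (P i) Q = dist (P 1) Q)"
    unfolding Lspan_def by (simp only:)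
  then have "equidistant_point P m \<in> Lspan P 1 m
      \<and> (\<forall>i\<in>{1..m}. dist (P i) (equidistant_point P m) = dist (P 1) (equidistant_point P m))"
    unfolding equidistant_point_def by (rule theI')
  then show "equidistant_point P m \<in> Lspan P 1 m"
    and "\<forall>i\<in>{1..m}. dist (P i) (equidistant_point P m) = dist (P 1) (equidistant_point P m)"
    by (rule conjunct1, rule conjunct2)
qed

lemma Qseq_in_Lspan_equidistant:
  fixes P :: "nat \<Rightarrow> 'a::euclidean_space"
  assumes gp: "general_position P m" and "k + 1 \<le> m"
  shows "Qseq P m k \<in> Lspan P (k + 1) m
    \<and> (\<forall>i\<in>{k+1..m}. dist (P i) (Qseq P m k) = dist (P (k + 1)) (Qseq P m k))"
  using assms(2)
proof (induction k)
  case 0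
  then have "1 \<le> m" by simp
  then show ?case unfolding Qseq.simps(1) add_0 using equidistant_point[OF gp] by blast
next
  case (Suc k)
  have "k + 1 \<le> m" using Suc.prems by simp
  then have IH: "\<forall>i\<in>{k+1..m}. dist (P i) (Qseq P m k) = dist (P (k + 1)) (Qseq P m k)"
    using Suc.IH by blast
  let ?L = "Lspan P (k + 2) m" and ?A = "Qseq P m k"
  let ?B = "closest_point ?L ?A"
  have P_L: "P i \<in> ?L" if "i \<in> {k+2..m}" for i
    unfolding Lspan_def using that by (intro hull_inc) auto
  have "closed ?L" "affine ?L" unfolding Lspan_def by simp_all
  moreover have "?L \<noteq> {}" using P_L[of m] Suc.prems by auto
  ultimately have B: "Qseq P m (Suc k) = ?B" "?B \<in> ?L"
    by (simp_all add: proj_eq_closest_point affine_imp_convex closest_point_in_set)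
  have pyth: "(dist (P i) ?A)\<^sup>2 = (dist (P i) ?B)\<^sup>2 + (dist ?B ?A)\<^sup>2" if "i \<in> {k+2..m}" for i
  proof -
    have "orthogonal (P i - ?B) (?B - ?A)"
      using closest_point_affine_orthogonal[OF \<open>affine ?L\<close> \<open>closed ?L\<close> P_L[OF that], of ?A]
      by (simp add: orthogonal_def inner_commute inner_diff_left inner_diff_right)
    then show ?thesis
      using norm_add_Pythagorean[of "P i - ?B" "?B - ?A"] by (simp add: dist_norm)
  qed
  have eq: "\<forall>i\<in>{k+2..m}. dist (P i) ?B = dist (P (k + 2)) ?B"
  proof
    fix i assume i: "i \<in> {k+2..m}"
    have "i \<in> {k+1..m}" "k + 2 \<in> {k+1..m}" using i by auto
    then have "dist (P i) ?A = dist (P (k + 2)) ?A"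
      using IH by (metis (no_types, lifting))
    then have "(dist (P i) ?A)\<^sup>2 = (dist (P (k + 2)) ?A)\<^sup>2" by simp
    moreover have "k + 2 \<in> {k+2..m}" using i by simp
    ultimately have "(dist (P i) ?B)\<^sup>2 = (dist (P (k + 2)) ?B)\<^sup>2"
      using pyth[OF i] pyth[of "k + 2"] by linarith
    then show "dist (P i) ?B = dist (P (k + 2)) ?B" by (simp add: power2_eq_iff_nonneg)
  qed
  have "Suc k + 1 = k + 2" by simp
  show ?case unfolding B(1) \<open>Suc k + 1 = k + 2\<close> using B(2) eq by blast
qed

lemma Lspan_subset_Lspan_1: "1 \<le> a \<Longrightarrow> Lspan P a m \<subseteq> Lspan P 1 m"
  unfolding Lspan_def by (intro hull_mono image_mono) auto

lemma Qseq_bary_combination: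
  fixes P :: "nat \<Rightarrow> 'a::euclidean_space"
  assumes gp: "general_position P m" and "k + 1 \<le> m"
  shows "sum (bary P m (Qseq P m k)) {1..m} = 1"
    and "Qseq P m k = (\<Sum>i=1..m. bary P m (Qseq P m k) i *\<^sub>R P i)"
proof -
  have "Qseq P m k \<in> Lspan P 1 m"
    using Qseq_in_Lspan_equidistant[OF assms] Lspan_subset_Lspan_1[of "k + 1" P m] by auto
  then show "sum (bary P m (Qseq P m k)) {1..m} = 1"
    and "Qseq P m k = (\<Sum>i=1..m. bary P m (Qseq P m k) i *\<^sub>R P i)"
    by (rule bary_combination[OF gp])+
qed

lemma Qseq_weighted_sum_dist_sq:
  fixes P :: "nat \<Rightarrow> 'a::euclidean_space"
  assumes gp: "general_position P m" and "k + 1 \<le> m"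
    and "\<forall>i\<in>{1..k}. bary P m (Qseq P m k) i = 0"
  shows "(\<Sum>i=1..m. bary P m (Qseq P m k) i * (dist (P i) Y)\<^sup>2)
    = (dist (P (k + 1)) (Qseq P m k))\<^sup>2 + (dist (Qseq P m k) Y)\<^sup>2"
proof (rule weighted_sum_dist_sq_equidistant[OF Qseq_bary_combination[OF assms(1,2)]])
  fix i assume "i \<in> {1..m}" "bary P m (Qseq P m k) i \<noteq> 0"
  then have "i \<in> {k+1..m}" using assms(3) by fastforce
  then show "dist (P i) (Qseq P m k) = dist (P (k + 1)) (Qseq P m k)"
    using Qseq_in_Lspan_equidistant[OF assms(1,2)] by blast
qed

text \<open>For k \<le> K the weights of Q^K sit on points equidistant from Q^k, so the
  parallel-axis identities for Q^k and Q^K give that the sum equals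
  r^2 + 2 (dist Q^k Q^K)^2.\<close>
lemma Qseq_weighted_sum_dist_sq_ge:
  fixes P :: "nat \<Rightarrow> 'a::euclidean_space"
  assumes gp: "general_position P m" and "K + 1 \<le> m" "k \<le> K"
    and supp_k: "\<forall>i\<in>{1..k}. bary P m (Qseq P m k) i = 0"
    and supp_K: "\<forall>i\<in>{1..K}. bary P m (Qseq P m K) i = 0"
  shows "(dist (P (K + 1)) (Qseq P m K))\<^sup>2
    \<le> (\<Sum>i=1..m. bary P m (Qseq P m k) i * (dist (P i) (Qseq P m K))\<^sup>2)"
proof -
  let ?C = "Qseq P m K" and ?D = "Qseq P m k"
  let ?r = "dist (P (K + 1)) ?C" and ?\<rho> = "dist (P (k + 1)) ?D"
  have k: "k + 1 \<le> m" using assms(2,3) by simp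
  have "?\<rho>\<^sup>2 = (\<Sum>i=1..m. bary P m ?C i * (dist (P i) ?D)\<^sup>2)"
  proof (rule sum_weights_const[OF Qseq_bary_combination(1)[OF gp assms(2)], symmetric])
    fix i assume "i \<in> {1..m}" "bary P m ?C i \<noteq> 0"
    then have "i \<in> {k+1..m}" using supp_K assms(3) by fastforce
    then have "dist (P i) ?D = ?\<rho>" using Qseq_in_Lspan_equidistant[OF gp k] by blast
    then show "(dist (P i) ?D)\<^sup>2 = ?\<rho>\<^sup>2" by simp
  qed
  also have "\<dots> = ?r\<^sup>2 + (dist ?C ?D)\<^sup>2"
    by (rule Qseq_weighted_sum_dist_sq[OF gp assms(2) supp_K])
  finally have "(\<Sum>i=1..m. bary P m ?D i * (dist (P i) ?C)\<^sup>2) = ?r\<^sup>2 + 2 * (dist ?C ?D)\<^sup>2"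
    using Qseq_weighted_sum_dist_sq[OF gp k supp_k, of ?C] by (simp add: dist_commute)
  then show ?thesis by simp
qed

lemma Qseq_encloses:
  fixes P :: "nat \<Rightarrow> 'a::euclidean_space"
  assumes gp: "general_position P m" and K: "K + 1 \<le> m"
    and neg: "\<forall>k<K. (\<forall>i\<in>{1..k}. bary P m (Qseq P m k) i = 0)
               \<and> bary P m (Qseq P m k) (k + 1) < 0
               \<and> (\<forall>i\<in>{k+2..m}. bary P m (Qseq P m k) i > 0)"
    and supp_K: "\<forall>i\<in>{1..K}. bary P m (Qseq P m K) i = 0"
    and "i \<in> {1..m}"
  shows "dist (P i) (Qseq P m K) \<le> dist (P (K + 1)) (Qseq P m K)"
proof -
  let ?C = "Qseq P m K" let ?r = "dist (P (K + 1)) ?C"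
  have far: "dist (P i) ?C = ?r" if "i \<in> {K+1..m}" for i
    using Qseq_in_Lspan_equidistant[OF gp K] that by blast
  have "dist (P j) ?C \<le> ?r" if "j \<in> {1..K}" for j
    using that
  proof (induction "K - j" arbitrary: j rule: less_induct)
    case less
    define k where "k = j - 1"
    have j: "j = k + 1" "k < K" using less.prems by (auto simp: k_def)
    let ?\<mu> = "bary P m (Qseq P m k)"
    have \<mu>: "\<forall>i\<in>{1..k}. ?\<mu> i = 0" "?\<mu> j < 0" "\<forall>i\<in>{k+2..m}. ?\<mu> i > 0"
      using neg j by blast+
    show ?case
    proof (rule dist_le_of_negative_weight[of "{1..m}" j ?\<mu>])
      show "j \<in> {1..m}" "sum ?\<mu> {1..m} = 1"
        using j K Qseq_bary_combination(1)[OF gp, of k] by auto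
      show "?\<mu> j < 0" by (rule \<mu>(2))
      show "?r\<^sup>2 \<le> (\<Sum>i=1..m. ?\<mu> i * (dist (P i) ?C)\<^sup>2)"
        using Qseq_weighted_sum_dist_sq_ge[OF gp K _ \<mu>(1) supp_K] j by simp
    next
      fix i assume i: "i \<in> {1..m} - {j}"
      show "?\<mu> i = 0 \<or> (0 < ?\<mu> i \<and> dist (P i) ?C \<le> ?r)"
      proof (cases "i < j")
        case True
        then have "i \<in> {1..k}" using i j by auto
        then show ?thesis using \<mu>(1) by simp
      next
        case False
        then have "j < i" "i \<in> {k+2..m}" using i j by auto
        moreover have "dist (P i) ?C \<le> ?r"
        proof (cases "i \<le> K")
          case True
          then show ?thesis using less.hyps[of i] \<open>j < i\<close> i by auto
        next
          case False
          then show ?thesis using far[of i] i by auto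
        qed
        ultimately show ?thesis using \<mu>(3) by blast
      qed
    qed simp_all
  qed
  then show ?thesis using far[of i] assms(5) by (cases "i \<le> K") auto
qed

theorem theorem2:
  fixes P :: "nat \<Rightarrow> 'a::euclidean_space" and m K :: nat
  assumes "m \<ge> 2"
    and "general_position P m"
    and "K \<le> m - 2"
    and "\<forall>k<K. (\<forall>i\<in>{1..k}. bary P m (Qseq P m k) i = 0)
               \<and> bary P m (Qseq P m k) (k + 1) < 0
               \<and> (\<forall>i\<in>{k+2..m}. bary P m (Qseq P m k) i > 0)"
    and "\<forall>i\<in>{1..K}. bary P m (Qseq P m K) i = 0"
    and "\<forall>i\<in>{K+1..m}. bary P m (Qseq P m K) i > 0"
  shows "sec_center P m = Qseq P m K \<and> sec_radius P m = dist (P (K + 1)) (Qseq P m K)"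
proof (rule sec_center_sec_radius_eqI)
  have K: "K + 1 \<le> m" using assms(1,3) by linarith
  show "sum (bary P m (Qseq P m K)) {1..m} = 1"
    and "Qseq P m K = (\<Sum>i=1..m. bary P m (Qseq P m K) i *\<^sub>R P i)"
    using Qseq_bary_combination[OF assms(2) K] by auto
  show "\<forall>i\<in>{1..m}. 0 \<le> bary P m (Qseq P m K) i"
  proof
    fix i assume "i \<in> {1..m}"
    then show "0 \<le> bary P m (Qseq P m K) i"
      using assms(5,6) by (cases "i \<le> K") (auto simp: less_imp_le)
  qed
  show "\<forall>i\<in>{1..m}. dist (P i) (Qseq P m K) \<le> dist (P (K + 1)) (Qseq P m K)"
    using Qseq_encloses[OF assms(2) K assms(4,5)] by blast
  show "\<forall>i\<in>{1..m}. bary P m (Qseq P m K) i \<noteq> 0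
      \<longrightarrow> dist (P i) (Qseq P m K) = dist (P (K + 1)) (Qseq P m K)"
  proof (intro ballI impI)
    fix i assume "i \<in> {1..m}" "bary P m (Qseq P m K) i \<noteq> 0"
    then have "i \<in> {K+1..m}" using assms(5) by fastforce
    then show "dist (P i) (Qseq P m K) = dist (P (K + 1)) (Qseq P m K)"
      using Qseq_in_Lspan_equidistant[OF assms(2) K] by blast
  qed
qed

end
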